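(* The class of Subgraph MPNNs cannot count $8$-cycles at graph level, and cannot count $8$-paths at graph level. That is, there exist graphs $G_1,G_2$ with $C(8\text{-cycle},G_1)\neq C(8\text{-cycle},G_2)$ such that $h_{G_1}=h_{G_2}$ for every Subgraph MPNN, and there exist graphs $G_1,G_2$ with $C(8\text{-path},G_1)\neq C(8\text{-path},G_2)$ such that $h_{G_1}=h_{G_2}$ for every Subgraph MPNN.
   Context: Graphs are finite, simple, undirected, $G=(V,E)$, possibly carrying node attributes $x_v$ and edge attributes $e_{u,v}$ (a fixed constant when absent). $N(v)$ is the neighbour set of $v$. For $L\ge 1$, an $L$-path is a sequence of edges $(v_1,v_2),(v_2,v_3),\dots,(v_L,v_{L+1})$ of $G$ with $v_1,\dots,v_{L+1}$ pairwise distinct; for $L\ge 3$, an $L$-cycle is such a sequence with $v_1,\dots,v_L$ pairwise distinct and $v_{L+1}=v_1$. Two paths (resp. cycles) are identified when their edge sets coincide. $C(L\text{-cycle},G)$ and $C(L\text{-path},G)$ denote the numbers of inequivalent $L$-cycles and $L$-paths of $G$. A class $\mathcal F$ of functions on graphs can count a substructure $S$ at graph level if for all graphs $G_1,G_2$ with $C(S,G_1)\ne C(S,G_2)$ there is $f\in\mathcal F$ with $f(G_1)\neq f(G_2)$. Subgraph MPNNs. A Subgraph MPNN is specified by: (1) a subgraph extraction rule, either node deletion, $(V_i,E_i)=(V\setminus\{i\},E\setminus\{(i,j):j\in N(i)\})$, or the $K$-hop ego-network for some integer $K\ge1$, i.e. $(V_i,E_i)$ is the subgraph of $G$ induced by the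 nodes at shortest-path distance at most $K$ from $i$; (2) a node labeling $z_{i,j}$, which is either absent, identity labeling $z_{i,j}=\mathbb 1_{i=j}$, or shortest path distance $z_{i,j}=\mathrm{spd}(i,j)$ in $G$; (3) a number of layers $T$ and arbitrary functions $M_t$ (with values in some $\mathbb R^{d_t}$) and $U_t$, $t=0,\dots,T-1$; (4) arbitrary readout functions $R_{\text{node}},R_{\text{graph}}$ on finite multisets. For each root $i\in V$ and $j\in V_i$: $h^{(0)}_{i,j}=x_j\oplus z_{i,j}$ ($\oplus$ = concatenation), $h^{(t+1)}_{i,j}=U_t\big(h^{(t)}_{i,j},\sum_{k\in N_i(j)}M_t(h^{(t)}_{i,j},h^{(t)}_{i,k},e_{j,k})\big)$ where $N_i(j)=\{k\in V_i:(j,k)\in E_i\}$; then $h_i=R_{\text{node}}(\{\!\{h^{(T)}_{i,j}:j\in V_i\}\!\})$ and $h_G=R_{\text{graph}}(\{\!\{h_i:i\in V\}\!\})$. The graph-level function computed is $G\mapsto h_G$, and the class of Subgraph MPNNs consists of all such choices. *)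

theory Defs
  imports Complex_Main "HOL-Library.Multiset" "HOL-Library.Extended_Nat"
begin

record graph =
  verts :: "nat set"
  adj   :: "nat \<Rightarrow> nat \<Rightarrow> bool"
  nattr :: "nat \<Rightarrow> real list"
  eattr :: "nat \<Rightarrow> nat \<Rightarrow> real list"

definition wf_graph :: "graph \<Rightarrow> bool" where
  "wf_graph G \<longleftrightarrow> finite (verts G) \<and>
     (\<forall>u v. adj G u v \<longrightarrow> u \<in> verts G \<and> v \<in> verts G \<and> u \<noteq> v \<and> adj G v u
                         \<and> eattr G u v = eattr G v u)"

definition is_walk :: "graph \<Rightarrow> nat \<Rightarrow> nat list \<Rightarrow> bool" where
  "is_walk G L vs \<longleftrightarrow> length vs = Suc L \<and> (\<forall>k<L. adj G (vs ! k) (vs ! Suc k))"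

definition walk_edges :: "nat \<Rightarrow> nat list \<Rightarrow> nat set set" where
  "walk_edges L vs = {{vs ! k, vs ! Suc k} | k. k < L}"

definition is_path :: "graph \<Rightarrow> nat \<Rightarrow> nat list \<Rightarrow> bool" where
  "is_path G L vs \<longleftrightarrow> 1 \<le> L \<and> is_walk G L vs \<and> distinct vs"

definition is_cycle :: "graph \<Rightarrow> nat \<Rightarrow> nat list \<Rightarrow> bool" where
  "is_cycle G L vs \<longleftrightarrow> 3 \<le> L \<and> is_walk G L vs \<and> distinct (take L vs) \<and> vs ! L = vs ! 0"

text \<open>Numbers of inequivalent L-paths / L-cycles (identified by their edge sets).\<close>
definition count_paths :: "nat \<Rightarrow> graph \<Rightarrow> nat" where
  "count_paths L G = card (walk_edges L ` {vs. is_path G L vs})"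

definition count_cycles :: "nat \<Rightarrow> graph \<Rightarrow> nat" where
  "count_cycles L G = card (walk_edges L ` {vs. is_cycle G L vs})"

text \<open>Shortest path distance in G (infinity if unreachable).\<close>
definition spd :: "graph \<Rightarrow> nat \<Rightarrow> nat \<Rightarrow> enat" where
  "spd G i j = Inf {enat n | n. \<exists>vs. is_walk G n vs \<and> vs ! 0 = i \<and> vs ! n = j}"

datatype extraction = NodeDeletion | EgoNet nat
datatype labeling = NoLabel | IdentityLabel | SpdLabel

definition sub_verts :: "extraction \<Rightarrow> graph \<Rightarrow> nat \<Rightarrow> nat set" where
  "sub_verts ex G i = (case ex of
      NodeDeletion \<Rightarrow> verts G - {i}
    | EgoNet K \<Rightarrow> {j \<in> verts G. spd G i j \<le> enat K})"

text \<open>Edges of the subgraph: for node deletion, edges not incident to i; for the ego-network,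
  the induced subgraph.\<close>
definition sub_adj :: "extraction \<Rightarrow> graph \<Rightarrow> nat \<Rightarrow> nat \<Rightarrow> nat \<Rightarrow> bool" where
  "sub_adj ex G i u v \<longleftrightarrow> adj G u v \<and> u \<in> sub_verts ex G i \<and> v \<in> sub_verts ex G i"

definition node_label :: "labeling \<Rightarrow> graph \<Rightarrow> nat \<Rightarrow> nat \<Rightarrow> real list" where
  "node_label lb G i j = (case lb of
      NoLabel \<Rightarrow> []
    | IdentityLabel \<Rightarrow> [if i = j then 1 else 0]
    | SpdLabel \<Rightarrow> (case spd G i j of enat n \<Rightarrow> [real n] | \<infinity> \<Rightarrow> [-1]))"

text \<open>Hidden states are real vectors (real lists); messages are vectors in R^d, represented
  as functions nat => real vanishing from index d on (constraint in valid_mpnn).\<close>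
record mpnn =
  ext    :: extraction
  lab    :: labeling
  layers :: nat
  msg    :: "nat \<Rightarrow> real list \<Rightarrow> real list \<Rightarrow> real list \<Rightarrow> nat \<Rightarrow> real"
  upd    :: "nat \<Rightarrow> real list \<Rightarrow> (nat \<Rightarrow> real) \<Rightarrow> real list"
  rnode  :: "real list multiset \<Rightarrow> real list"
  rgraph :: "real list multiset \<Rightarrow> real list"

definition valid_mpnn :: "mpnn \<Rightarrow> bool" where
  "valid_mpnn P \<longleftrightarrow> (\<forall>K. ext P = EgoNet K \<longrightarrow> 1 \<le> K) \<and>
     (\<forall>t < layers P. \<exists>d. \<forall>a b c n. d \<le> n \<longrightarrow> msg P t a b c n = 0)"

fun hidden :: "mpnn \<Rightarrow> graph \<Rightarrow> nat \<Rightarrow> nat \<Rightarrow> nat \<Rightarrow> real list" where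
  "hidden P G 0 i j = nattr G j @ node_label (lab P) G i j"
| "hidden P G (Suc t) i j =
     upd P t (hidden P G t i j)
       (\<lambda>c. \<Sum>k \<in> {k \<in> sub_verts (ext P) G i. sub_adj (ext P) G i j k}.
               msg P t (hidden P G t i j) (hidden P G t i k) (eattr G j k) c)"

definition root_emb :: "mpnn \<Rightarrow> graph \<Rightarrow> nat \<Rightarrow> real list" where
  "root_emb P G i = rnode P (image_mset (hidden P G (layers P) i) (mset_set (sub_verts (ext P) G i)))"

definition mpnn_out :: "mpnn \<Rightarrow> graph \<Rightarrow> real list" where
  "mpnn_out P G = rgraph P (image_mset (root_emb P G) (mset_set (verts G)))"

definition subgraph_mpnns :: "(graph \<Rightarrow> real list) set" where
  "subgraph_mpnns = {mpnn_out P | P. valid_mpnn P}"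

definition can_count_graph_level :: "(graph \<Rightarrow> 'b) set \<Rightarrow> (graph \<Rightarrow> nat) \<Rightarrow> bool" where
  "can_count_graph_level F C \<longleftrightarrow>
     (\<forall>G1 G2. wf_graph G1 \<longrightarrow> wf_graph G2 \<longrightarrow> C G1 \<noteq> C G2 \<longrightarrow> (\<exists>f\<in>F. f G1 \<noteq> f G2))"

end

theory Submission
  imports Defs
begin

text \<open>The \<open>4 \<times> 4\<close> rook's graph and the Shrikhande graph are both strongly regular with parameters
  \<open>(16, 6, 2, 2)\<close>. In a strongly regular graph with \<open>\<mu> > 0\<close> every node is at distance at most 2
  from the root, each extracted subgraph is a union of distance classes, and the number of
  neighbours at distance \<open>d'\<close> of a node at distance \<open>d\<close> depends only on \<open>(k, \<lambda>, \<mu>)\<close>. By induction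
  on the layers the hidden state of a node is a function of its distance to the root alone, so every
  Subgraph MPNN gives the same output on two such graphs with equal parameters.

  Both graphs are arc-transitive, so the number of vertex lists of their 8-cycles (8-paths) is 96
  times the number of those starting with the arc \<open>(0, 1)\<close>; a verified depth-first enumeration
  gives 1992 against 1948 (18336 against 18280). As every cycle (path) has the same number of vertex
  lists in any graph, the numbers of 8-cycles and of 8-paths differ.\<close>

section \<open>Subgraph MPNNs on strongly regular graphs\<close>

definition strongly_regular :: "graph \<Rightarrow> nat \<Rightarrow> nat \<Rightarrow> nat \<Rightarrow> nat \<Rightarrow> bool" where
  "strongly_regular G n k l m \<longleftrightarrow> wf_graph G \<and> card (verts G) = n \<and>
     (\<forall>i\<in>verts G. card {x\<in>verts G. adj G i x} = k) \<and>
     (\<forall>i\<in>verts G. \<forall>j\<in>verts G. i \<noteq> j \<longrightarrow>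
        card {x\<in>verts G. adj G i x \<and> adj G j x} = (if adj G i j then l else m))"

definition unattributed :: "graph \<Rightarrow> bool" where
  "unattributed G \<longleftrightarrow> nattr G = (\<lambda>_. []) \<and> (\<forall>u v. eattr G u v = [])"

lemma sum_group_by_value:
  fixes g :: "nat \<Rightarrow> 'a::comm_semiring_1"
  assumes "finite X" "\<And>x. x \<in> X \<Longrightarrow> f x < N"
  shows "(\<Sum>x\<in>X. g (f x)) = (\<Sum>d<N. of_nat (card {x\<in>X. f x = d}) * g d)"
proof -
  have "(\<Sum>x\<in>X. g (f x)) = (\<Sum>d<N. \<Sum>x\<in>{x\<in>X. f x = d}. g (f x))"
    using sum.group[of X "{..<N}" f "\<lambda>x. g (f x)"] assms by (auto simp: image_subset_iff)
  also have "\<dots> = (\<Sum>d<N. of_nat (card {x\<in>X. f x = d}) * g d)"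
    by (intro sum.cong) auto
  finally show ?thesis .
qed

lemma card_eq_sum_card_fibres:
  fixes f :: "'a \<Rightarrow> nat"
  shows "finite X \<Longrightarrow> (\<And>x. x \<in> X \<Longrightarrow> f x < N) \<Longrightarrow> card X = (\<Sum>d<N. card {x\<in>X. f x = d})"
  using sum_group_by_value[of X f N "\<lambda>_. 1::nat"] by simp

text \<open>The distance in a strongly regular graph with \<open>\<mu> = m > 0\<close>, where non-adjacent vertices have a
  common neighbour.\<close>
definition srg_dist :: "graph \<Rightarrow> nat \<Rightarrow> nat \<Rightarrow> nat" where
  "srg_dist G i j = (if i = j then 0 else if adj G i j then 1 else 2)"

definition srg_common :: "nat \<Rightarrow> nat \<Rightarrow> nat \<Rightarrow> nat \<Rightarrow> nat" where
  "srg_common k l m d = (if d = 0 then k else if d = 1 then l else m)"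

definition srg_nbrs_at :: "nat \<Rightarrow> nat \<Rightarrow> nat \<Rightarrow> nat \<Rightarrow> nat \<Rightarrow> nat" where
  "srg_nbrs_at k l m d c =
     (if c = 0 then (if d = 1 then 1 else 0)
      else if c = 1 then srg_common k l m d
      else if c = 2 then k - (if d = 1 then 1 else 0) - srg_common k l m d
      else 0)"

definition srg_class_size :: "nat \<Rightarrow> nat \<Rightarrow> nat \<Rightarrow> nat" where
  "srg_class_size n k c = (if c = 0 then 1 else if c = 1 then k else if c = 2 then n - 1 - k else 0)"

lemma srg_dist_lt_3: "srg_dist G i j < 3"
  by (simp add: srg_dist_def)

locale strongly_regular_graph =
  fixes G :: graph and n k l m :: nat
  assumes srg: "strongly_regular G n k l m" and m_pos: "0 < m"
begin

lemma wf: "wf_graph G"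
  and card_verts: "card (verts G) = n"
  and degree: "i \<in> verts G \<Longrightarrow> card {x\<in>verts G. adj G i x} = k"
  and common: "i \<in> verts G \<Longrightarrow> j \<in> verts G \<Longrightarrow> i \<noteq> j \<Longrightarrow>
     card {x\<in>verts G. adj G i x \<and> adj G j x} = (if adj G i j then l else m)"
  using srg unfolding strongly_regular_def by auto

lemma finite_verts: "finite (verts G)"
  and adj_verts: "adj G u v \<Longrightarrow> u \<in> verts G \<and> v \<in> verts G"
  and adj_sym: "adj G u v \<Longrightarrow> adj G v u"
  and adj_irrefl: "\<not> adj G u u"
  using wf unfolding wf_graph_def by auto

lemma card_common_nbrs:
  "i \<in> verts G \<Longrightarrow> j \<in> verts G \<Longrightarrow>
     card {x\<in>verts G. adj G i x \<and> adj G j x} = srg_common k l m (srg_dist G i j)"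
  using degree common by (cases "i = j") (auto simp: srg_dist_def srg_common_def)

lemma walk_of_srg_dist:
  assumes "i \<in> verts G" "j \<in> verts G"
  shows "\<exists>vs. is_walk G (srg_dist G i j) vs \<and> vs ! 0 = i \<and> vs ! srg_dist G i j = j"
proof -
  consider "i = j" | "i \<noteq> j" "adj G i j" | "i \<noteq> j" "\<not> adj G i j" by blast
  then show ?thesis
  proof cases
    case 1
    then show ?thesis by (intro exI[of _ "[i]"]) (simp add: srg_dist_def is_walk_def)
  next
    case 2
    then show ?thesis by (intro exI[of _ "[i, j]"]) (simp add: srg_dist_def is_walk_def)
  next
    case 3
    then have "card {x\<in>verts G. adj G i x \<and> adj G j x} \<noteq> 0"
      using common assms m_pos by simp
    then obtain x where "adj G i x" "adj G x j"
      using adj_sym by (metis (no_types, lifting) Collect_empty_eq card.empty)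
    then show ?thesis
      using 3 by (intro exI[of _ "[i, x, j]"]) (simp add: srg_dist_def is_walk_def less_Suc_eq numeral_2_eq_2)
  qed
qed

lemma srg_dist_le_walk_length:
  assumes "is_walk G N vs"
  shows "srg_dist G (vs ! 0) (vs ! N) \<le> N"
proof -
  consider "N = 0" | "N = 1" | "2 \<le> N" by linarith
  then show ?thesis
  proof cases
    case 2
    then have "adj G (vs ! 0) (vs ! 1)" using assms by (simp add: is_walk_def)
    then show ?thesis using 2 by (simp add: srg_dist_def)
  qed (auto simp: srg_dist_def)
qed

lemma spd_eq_srg_dist:
  assumes "i \<in> verts G" "j \<in> verts G"
  shows "spd G i j = enat (srg_dist G i j)"
  unfolding spd_def
proof (rule cInf_eq_minimum)
  show "enat (srg_dist G i j) \<in> {enat N | N. \<exists>vs. is_walk G N vs \<and> vs ! 0 = i \<and> vs ! N = j}"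
    using walk_of_srg_dist[OF assms] by blast
qed (use srg_dist_le_walk_length in auto)

lemma card_nbrs_at_dist:
  assumes i: "i \<in> verts G" and j: "j \<in> verts G"
  shows "card {x\<in>verts G. adj G j x \<and> srg_dist G i x = c} = srg_nbrs_at k l m (srg_dist G i j) c"
proof -
  let ?S = "\<lambda>c. {x\<in>verts G. adj G j x \<and> srg_dist G i x = c}"
  have S0: "card (?S 0) = (if srg_dist G i j = 1 then 1 else 0)"
  proof -
    have "?S 0 = (if adj G j i then {i} else {})" using i by (auto simp: srg_dist_def)
    then show ?thesis using adj_sym adj_irrefl by (auto simp: srg_dist_def)
  qed
  have S1: "card (?S 1) = srg_common k l m (srg_dist G i j)"
  proof -
    have "?S 1 = {x\<in>verts G. adj G i x \<and> adj G j x}"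
      using adj_irrefl by (auto simp: srg_dist_def)
    then show ?thesis using card_common_nbrs[OF i j] by simp
  qed
  have "{x\<in>{x\<in>verts G. adj G j x}. srg_dist G i x = c} = ?S c" for c
    by auto
  then have k: "k = card (?S 0) + card (?S 1) + card (?S 2)"
    using degree[OF j] card_eq_sum_card_fibres[of "{x\<in>verts G. adj G j x}" "srg_dist G i" 3]
      finite_verts srg_dist_lt_3 by (simp add: numeral_3_eq_3 numeral_2_eq_2)
  have "?S c = {}" if "3 \<le> c"
    using that srg_dist_lt_3[of G i] by (auto simp: not_less[symmetric])
  then consider "c = 0" | "c = 1" | "c = 2" | "?S c = {}" "3 \<le> c" by linarith
  then show ?thesis
  proof cases
    case 3
    then show ?thesis using S0 S1 k by (simp add: srg_nbrs_at_def)
  next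
    case 4
    then show ?thesis by (simp only: card.empty) (simp add: srg_nbrs_at_def)
  qed (use S0 S1 in \<open>simp_all add: srg_nbrs_at_def\<close>)
qed

lemma card_at_dist:
  assumes i: "i \<in> verts G"
  shows "card {x\<in>verts G. srg_dist G i x = c} = srg_class_size n k c"
proof -
  let ?C = "\<lambda>c. {x\<in>verts G. srg_dist G i x = c}"
  have C0: "?C 0 = {i}" using i by (auto simp: srg_dist_def)
  have C1: "?C 1 = {x\<in>verts G. adj G i x}" using adj_irrefl by (auto simp: srg_dist_def)
  have n: "n = card (?C 0) + card (?C 1) + card (?C 2)"
    using card_verts card_eq_sum_card_fibres[of "verts G" "srg_dist G i" 3] finite_verts srg_dist_lt_3
    by (simp add: numeral_3_eq_3 numeral_2_eq_2)
  have "?C c = {}" if "3 \<le> c"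
    using that srg_dist_lt_3[of G i] by (auto simp: not_less[symmetric])
  then consider "c = 0" | "c = 1" | "c = 2" | "?C c = {}" "3 \<le> c" by linarith
  then show ?thesis
  proof cases
    case 3
    then show ?thesis using n C0 C1 degree[OF i] by (simp add: srg_class_size_def)
  next
    case 4
    then show ?thesis by (simp only: card.empty) (simp add: srg_class_size_def)
  qed (use C0 C1 degree[OF i] in \<open>simp_all add: srg_class_size_def\<close>)
qed

end

fun kept_at_dist :: "extraction \<Rightarrow> nat \<Rightarrow> bool" where
  "kept_at_dist NodeDeletion d \<longleftrightarrow> d \<noteq> 0"
| "kept_at_dist (EgoNet K) d \<longleftrightarrow> d \<le> K"

fun label_at_dist :: "labeling \<Rightarrow> nat \<Rightarrow> real list" where
  "label_at_dist NoLabel d = []"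
| "label_at_dist IdentityLabel d = [if d = 0 then 1 else 0]"
| "label_at_dist SpdLabel d = [real d]"

fun srg_state :: "mpnn \<Rightarrow> nat \<Rightarrow> nat \<Rightarrow> nat \<Rightarrow> nat \<Rightarrow> nat \<Rightarrow> real list" where
  "srg_state P k l m 0 d = label_at_dist (lab P) d"
| "srg_state P k l m (Suc t) d = upd P t (srg_state P k l m t d)
     (\<lambda>c. \<Sum>d'<3. (if kept_at_dist (ext P) d' then real (srg_nbrs_at k l m d d') else 0) *
            msg P t (srg_state P k l m t d) (srg_state P k l m t d') [] c)"

definition srg_dist_mset :: "extraction \<Rightarrow> nat \<Rightarrow> nat \<Rightarrow> nat multiset" where
  "srg_dist_mset ex n k =
     filter_mset (kept_at_dist ex) ({#0#} + replicate_mset k 1 + replicate_mset (n - 1 - k) 2)"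

context strongly_regular_graph
begin

lemma sub_verts_eq:
  assumes i: "i \<in> verts G"
  shows "sub_verts ex G i = {x\<in>verts G. kept_at_dist ex (srg_dist G i x)}"
  using spd_eq_srg_dist[OF i]
  by (cases ex) (auto simp: sub_verts_def srg_dist_def)

lemma hidden_eq_srg_state:
  assumes plain: "unattributed G" and i: "i \<in> verts G"
  shows "j \<in> sub_verts (ext P) G i \<Longrightarrow> hidden P G t i j = srg_state P k l m t (srg_dist G i j)"
proof (induction t arbitrary: j)
  case 0
  then have "j \<in> verts G" using sub_verts_eq[OF i] by auto
  then show ?case using spd_eq_srg_dist[OF i] plain
    by (cases "lab P") (auto simp: node_label_def srg_dist_def unattributed_def)
next
  case (Suc t)
  let ?V = "sub_verts (ext P) G i"
  let ?X = "{x \<in> ?V. sub_adj (ext P) G i j x}"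
  let ?msg = "\<lambda>c d'. msg P t (srg_state P k l m t (srg_dist G i j)) (srg_state P k l m t d') [] c"
  have j: "j \<in> verts G" using Suc.prems sub_verts_eq[OF i] by auto
  have X_finite: "finite ?X" using finite_verts sub_verts_eq[OF i] by auto
  have card_X: "real (card {x\<in>?V. sub_adj (ext P) G i j x \<and> srg_dist G i x = d}) =
      (if kept_at_dist (ext P) d then real (srg_nbrs_at k l m (srg_dist G i j) d) else 0)" for d
  proof -
    have "{x\<in>?V. sub_adj (ext P) G i j x \<and> srg_dist G i x = d} =
        (if kept_at_dist (ext P) d then {x\<in>verts G. adj G j x \<and> srg_dist G i x = d} else {})"
      using Suc.prems sub_verts_eq[OF i] adj_verts by (auto simp: sub_adj_def)
    then show ?thesis using card_nbrs_at_dist[OF i j] by simp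
  qed
  have "(\<Sum>x\<in>?X. msg P t (hidden P G t i j) (hidden P G t i x) (eattr G j x) c)
      = (\<Sum>x\<in>?X. ?msg c (srg_dist G i x))" for c
    using Suc.IH Suc.prems plain by (intro sum.cong) (auto simp: unattributed_def)
  also have "\<dots> c = (\<Sum>d<3. (if kept_at_dist (ext P) d then real (srg_nbrs_at k l m (srg_dist G i j) d) else 0) *
      ?msg c d)" for c
    using sum_group_by_value[OF X_finite, of "srg_dist G i" 3 "?msg c"] by (simp add: srg_dist_lt_3 card_X)
  finally show ?case using Suc.IH[OF Suc.prems] by simp
qed

lemma image_mset_srg_dist:
  assumes i: "i \<in> verts G"
  shows "image_mset (srg_dist G i) (mset_set (sub_verts ex G i)) = srg_dist_mset ex n k"
proof (rule multiset_eqI)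
  fix c
  have "{x\<in>sub_verts ex G i. srg_dist G i x = c} =
      (if kept_at_dist ex c then {x\<in>verts G. srg_dist G i x = c} else {})"
    using sub_verts_eq[OF i] by auto
  then have "count (image_mset (srg_dist G i) (mset_set (sub_verts ex G i))) c =
      (if kept_at_dist ex c then srg_class_size n k c else 0)"
    using finite_verts card_at_dist[OF i] sub_verts_eq[OF i]
    by (simp add: count_image_mset' Collect_conj_eq[symmetric] conj_commute eq_commute[of c])
  then show "count (image_mset (srg_dist G i) (mset_set (sub_verts ex G i))) c = count (srg_dist_mset ex n k) c"
    by (simp add: srg_dist_mset_def srg_class_size_def)
qed

lemma mpnn_out_eq:
  assumes plain: "unattributed G"
  shows "mpnn_out P G = rgraph P (replicate_mset n
    (rnode P (image_mset (srg_state P k l m (layers P)) (srg_dist_mset (ext P) n k))))"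
proof -
  have "root_emb P G i = rnode P (image_mset (srg_state P k l m (layers P)) (srg_dist_mset (ext P) n k))"
    if i: "i \<in> verts G" for i
  proof -
    have "image_mset (hidden P G (layers P) i) (mset_set (sub_verts (ext P) G i))
        = image_mset (srg_state P k l m (layers P) \<circ> srg_dist G i) (mset_set (sub_verts (ext P) G i))"
      using hidden_eq_srg_state[OF plain i] finite_verts sub_verts_eq[OF i]
      by (intro image_mset_cong) auto
    then show ?thesis
      unfolding root_emb_def using image_mset_srg_dist[OF i] by (simp flip: image_mset.compositionality)
  qed
  then have "image_mset (root_emb P G) (mset_set (verts G)) = image_mset (\<lambda>_.
      rnode P (image_mset (srg_state P k l m (layers P)) (srg_dist_mset (ext P) n k))) (mset_set (verts G))"
    using finite_verts by (intro image_mset_cong) auto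
  then show ?thesis
    unfolding mpnn_out_def using card_verts finite_verts by (simp add: image_mset_const_eq)
qed

end

corollary mpnn_out_eq_if_strongly_regular:
  assumes "strongly_regular G1 n k l m" "strongly_regular G2 n k l m" "0 < m"
    and "unattributed G1" "unattributed G2"
  shows "mpnn_out P G1 = mpnn_out P G2"
  using strongly_regular_graph.mpnn_out_eq[of G1 n k l m] strongly_regular_graph.mpnn_out_eq[of G2 n k l m]
    assms by (simp add: strongly_regular_graph_def)

section \<open>Counting cycles and paths through their vertex lists\<close>

lemma card_eq_card_times_fibre_card:
  assumes "finite A" "finite S" "f ` A \<subseteq> S" "\<And>s. s \<in> S \<Longrightarrow> card {x\<in>A. f x = s} = c"
  shows "card A = card S * c"
proof -
  have "card A = (\<Sum>s\<in>S. card {x\<in>A. f x = s})"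
    using sum.group[OF assms(1-3), of "\<lambda>_. 1::nat"] by simp
  also have "\<dots> = card S * c"
    using assms(4) by simp
  finally show ?thesis .
qed

lemma walk_edges_eq_image: "walk_edges L vs = (\<lambda>k. {vs ! k, vs ! Suc k}) ` {..<L}"
  by (auto simp: walk_edges_def)

lemma walk_edges_map: "length vs = Suc L \<Longrightarrow> walk_edges L (map \<phi> vs) = (`) \<phi> ` walk_edges L vs"
  unfolding walk_edges_eq_image image_image by (rule image_cong) auto

lemma set_subset_Union_walk_edges:
  assumes "length vs = Suc L" "0 < L"
  shows "set vs \<subseteq> \<Union> (walk_edges L vs)"
proof
  fix x assume "x \<in> set vs"
  then obtain k where k: "k \<le> L" "x = vs ! k" using assms(1) by (metis in_set_conv_nth less_Suc_eq_le)
  show "x \<in> \<Union> (walk_edges L vs)"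
  proof (cases "k < L")
    case True
    then show ?thesis using k unfolding walk_edges_eq_image by auto
  next
    case False
    then show ?thesis using k assms(2) unfolding walk_edges_eq_image
      by (auto intro!: bexI[of _ "L - 1"])
  qed
qed

lemma successively_if_walk_edges_eq:
  assumes "wf_graph G" "successively (adj G) ws" "length vs = Suc L" "length ws = Suc L"
    and "walk_edges L vs = walk_edges L ws"
  shows "successively (adj G) vs"
  unfolding successively_conv_nth
proof (intro allI impI)
  fix k assume "Suc k < length vs"
  then have "{vs ! k, vs ! Suc k} \<in> walk_edges L ws"
    using assms(3,5) unfolding walk_edges_eq_image by auto
  then obtain j where "Suc j < length ws" "{vs ! k, vs ! Suc k} = {ws ! j, ws ! Suc j}"
    using assms(4) unfolding walk_edges_eq_image by auto
  then show "adj G (vs ! k) (vs ! Suc k)"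
    using assms(1,2) by (auto simp: successively_conv_nth doubleton_eq_iff wf_graph_def)
qed

lemma finite_lists_in_verts:
  "wf_graph G \<Longrightarrow> finite {vs. length vs = Suc L \<and> set vs \<subseteq> verts G}"
  using finite_lists_length_eq[of "verts G" "Suc L"] by (auto simp: wf_graph_def conj_commute)

lemma set_subset_verts_if_successively:
  assumes "wf_graph G"
  shows "successively (adj G) vs \<Longrightarrow> length vs \<noteq> 1 \<Longrightarrow> set vs \<subseteq> verts G"
proof (induction vs rule: induct_list012)
  case (3 x y zs)
  then show ?case using assms by (cases zs) (auto simp: wf_graph_def)
qed auto

definition graph_aut :: "graph \<Rightarrow> (nat \<Rightarrow> nat) \<Rightarrow> bool" where
  "graph_aut G \<sigma> \<longleftrightarrow> bij_betw \<sigma> (verts G) (verts G) \<and>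
     (\<forall>u\<in>verts G. \<forall>v\<in>verts G. adj G (\<sigma> u) (\<sigma> v) \<longleftrightarrow> adj G u v)"

lemma graph_aut_comp:
  assumes "graph_aut G \<sigma>" "graph_aut G \<tau>"
  shows "graph_aut G (\<sigma> \<circ> \<tau>)"
proof -
  have "adj G (\<sigma> (\<tau> u)) (\<sigma> (\<tau> v)) \<longleftrightarrow> adj G u v" if "u \<in> verts G" "v \<in> verts G" for u v
    using assms that bij_betw_apply[of \<tau> "verts G" "verts G"] by (simp add: graph_aut_def)
  then show ?thesis using assms by (auto simp: graph_aut_def intro: bij_betw_trans)
qed

lemma graph_aut_funpow: "graph_aut G \<sigma> \<Longrightarrow> graph_aut G (\<sigma> ^^ n)"
  by (induction n) (simp_all add: graph_aut_comp, simp add: graph_aut_def)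

lemma graph_aut_inv:
  assumes "graph_aut G \<sigma>"
  shows "graph_aut G (inv_into (verts G) \<sigma>)"
proof -
  let ?\<psi> = "inv_into (verts G) \<sigma>"
  have bij: "bij_betw \<sigma> (verts G) (verts G)" and adj: "\<And>u v. u \<in> verts G \<Longrightarrow> v \<in> verts G \<Longrightarrow>
      adj G (\<sigma> u) (\<sigma> v) \<longleftrightarrow> adj G u v"
    using assms by (auto simp: graph_aut_def)
  have "adj G (?\<psi> u) (?\<psi> v) \<longleftrightarrow> adj G u v" if "u \<in> verts G" "v \<in> verts G" for u v
    using adj[OF bij_betw_apply[OF bij_betw_inv_into[OF bij]] bij_betw_apply[OF bij_betw_inv_into[OF bij]]]
      that bij_betw_inv_into_right[OF bij] by simp
  then show ?thesis using bij_betw_inv_into[OF bij] by (simp add: graph_aut_def)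
qed

lemma arc_images_if_vertex_transitive:
  assumes "wf_graph G" "a0 \<in> verts G"
    and vertex: "\<And>a. a \<in> verts G \<Longrightarrow> \<exists>\<tau>. graph_aut G \<tau> \<and> \<tau> a0 = a"
    and stabiliser: "\<And>c. adj G a0 c \<Longrightarrow> \<exists>\<rho>. graph_aut G \<rho> \<and> \<rho> a0 = a0 \<and> \<rho> b0 = c"
    and "adj G a b"
  shows "\<exists>\<sigma>. graph_aut G \<sigma> \<and> \<sigma> a0 = a \<and> \<sigma> b0 = b"
proof -
  have ab: "a \<in> verts G" "b \<in> verts G" using assms(1,5) by (auto simp: wf_graph_def)
  obtain \<tau> where \<tau>: "graph_aut G \<tau>" "\<tau> a0 = a" using vertex ab(1) by blast
  then have bij: "bij_betw \<tau> (verts G) (verts G)" by (simp add: graph_aut_def)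
  then obtain c where c: "c \<in> verts G" "\<tau> c = b" using ab(2) by (metis bij_betw_iff_bijections)
  have "adj G (\<tau> a0) (\<tau> c) \<longleftrightarrow> adj G a0 c" using \<tau>(1) c(1) assms(2) by (simp add: graph_aut_def)
  then have "adj G a0 c" using \<tau>(2) c(2) assms(5) by simp
  then obtain \<rho> where "graph_aut G \<rho>" "\<rho> a0 = a0" "\<rho> b0 = c" using stabiliser by blast
  then show ?thesis
    using graph_aut_comp[OF \<tau>(1)] \<tau>(2) c(2) by (intro exI[of _ "\<tau> \<circ> \<rho>"]) auto
qed

definition arcs :: "graph \<Rightarrow> (nat \<times> nat) set" where
  "arcs G = {(a, b). adj G a b}"

lemma arcs_eq_Sigma: "wf_graph G \<Longrightarrow> arcs G = Sigma (verts G) (\<lambda>a. {b\<in>verts G. adj G a b})"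
  by (auto simp: arcs_def wf_graph_def)

lemma card_arcs_regular:
  assumes "wf_graph G" "\<And>a. a \<in> verts G \<Longrightarrow> card {b\<in>verts G. adj G a b} = k"
  shows "card (arcs G) = card (verts G) * k"
  using assms by (simp add: arcs_eq_Sigma wf_graph_def)

definition edge_set_reps :: "(nat list \<Rightarrow> bool) \<Rightarrow> nat \<Rightarrow> nat set set \<Rightarrow> nat list set" where
  "edge_set_reps Q L E = {vs. Q vs \<and> walk_edges L vs = E}"

definition shaped_walks :: "(nat list \<Rightarrow> bool) \<Rightarrow> graph \<Rightarrow> nat list set" where
  "shaped_walks Q G = {vs. Q vs \<and> successively (adj G) vs}"

definition shaped_walks_from :: "(nat list \<Rightarrow> bool) \<Rightarrow> graph \<Rightarrow> nat \<Rightarrow> nat \<Rightarrow> nat list set" where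
  "shaped_walks_from Q G a b = {vs \<in> shaped_walks Q G. vs ! 0 = a \<and> vs ! 1 = b}"

text \<open>A class \<open>Q\<close> of vertex lists of \<open>L\<close>-walks (such as the lists of \<open>L\<close>-cycles or of \<open>L\<close>-paths)
  that consists of the injective relabellings of a single list \<open>std\<close>.\<close>
locale walk_shape =
  fixes L :: nat and Q :: "nat list \<Rightarrow> bool" and std :: "nat list"
  assumes L_pos: "0 < L"
    and length_shape: "Q vs \<Longrightarrow> length vs = Suc L"
    and shape_map: "Q vs \<Longrightarrow> inj_on \<phi> (set vs) \<Longrightarrow> Q (map \<phi> vs)"
    and relabel_std: "Q vs \<Longrightarrow> map ((!) vs) std = vs \<and> inj_on ((!) vs) (set std)"
begin

lemma set_subset_verts: "wf_graph G \<Longrightarrow> vs \<in> shaped_walks Q G \<Longrightarrow> set vs \<subseteq> verts G"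
  using set_subset_verts_if_successively length_shape L_pos by (fastforce simp: shaped_walks_def)

lemma finite_shaped_walks: "wf_graph G \<Longrightarrow> finite (shaped_walks Q G)"
  by (rule finite_subset[OF _ finite_lists_in_verts[of G L]])
    (use set_subset_verts length_shape in \<open>auto simp: shaped_walks_def\<close>)

lemma finite_edge_set_reps: "finite (\<Union>E) \<Longrightarrow> finite (edge_set_reps Q L E)"
  by (rule finite_subset[OF _ finite_lists_length_eq[of "\<Union>E" "Suc L"]])
    (use set_subset_Union_walk_edges length_shape L_pos in \<open>fastforce simp: edge_set_reps_def\<close>)

lemma card_edge_set_reps_le:
  assumes fin: "finite (\<Union>E)" and inj: "inj_on \<phi> (\<Union>E)"
  shows "card (edge_set_reps Q L E) \<le> card (edge_set_reps Q L ((`) \<phi> ` E))"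
proof (rule card_inj_on_le)
  have sub: "set vs \<subseteq> \<Union>E" if "vs \<in> edge_set_reps Q L E" for vs
    using that set_subset_Union_walk_edges[OF length_shape L_pos] by (auto simp: edge_set_reps_def)
  show "inj_on (map \<phi>) (edge_set_reps Q L E)"
  proof (rule inj_onI)
    fix xs ys assume "xs \<in> edge_set_reps Q L E" "ys \<in> edge_set_reps Q L E" "map \<phi> xs = map \<phi> ys"
    then show "xs = ys"
      using inj_on_map_eq_map[OF inj_on_subset[OF inj, of "set xs \<union> set ys"]] sub by blast
  qed
  show "map \<phi> ` edge_set_reps Q L E \<subseteq> edge_set_reps Q L ((`) \<phi> ` E)"
  proof
    fix ws assume "ws \<in> map \<phi> ` edge_set_reps Q L E"
    then obtain vs where vs: "vs \<in> edge_set_reps Q L E" "ws = map \<phi> vs" by blast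
    then have "Q ws" using shape_map inj_on_subset[OF inj sub[OF vs(1)]] by (simp add: edge_set_reps_def)
    moreover have "walk_edges L ws = (`) \<phi> ` E"
      using vs walk_edges_map[OF length_shape] by (simp add: edge_set_reps_def)
    ultimately show "ws \<in> edge_set_reps Q L ((`) \<phi> ` E)" by (simp add: edge_set_reps_def)
  qed
  show "finite (edge_set_reps Q L ((`) \<phi> ` E))"
    using fin by (intro finite_edge_set_reps) (simp flip: image_Union)
qed

lemma card_edge_set_reps_image:
  assumes fin: "finite (\<Union>E)" and inj: "inj_on \<phi> (\<Union>E)"
  shows "card (edge_set_reps Q L ((`) \<phi> ` E)) = card (edge_set_reps Q L E)"
proof (rule antisym)
  let ?\<psi> = "inv_into (\<Union>E) \<phi>"
  have "(`) ?\<psi> ` (`) \<phi> ` E = E"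
  proof -
    have "?\<psi> ` \<phi> ` e = e" if "e \<in> E" for e
    proof -
      have "(\<lambda>x. ?\<psi> (\<phi> x)) ` e = (\<lambda>x. x) ` e"
        using that inv_into_f_f[OF inj] by (intro image_cong) auto
      then show ?thesis by (simp add: image_image)
    qed
    then show ?thesis by (simp add: image_image)
  qed
  moreover have "inj_on ?\<psi> (\<Union>((`) \<phi> ` E))"
    using inj_on_inv_into[of "\<Union>((`) \<phi> ` E)" \<phi> "\<Union>E"] by blast
  moreover have "finite (\<Union>((`) \<phi> ` E))" using fin by (simp flip: image_Union)
  ultimately show "card (edge_set_reps Q L ((`) \<phi> ` E)) \<le> card (edge_set_reps Q L E)"
    using card_edge_set_reps_le[of "(`) \<phi> ` E" ?\<psi>] by simp
qed (rule card_edge_set_reps_le[OF assms])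

lemma card_edge_set_reps_eq_std:
  assumes "Q vs"
  shows "card (edge_set_reps Q L (walk_edges L vs)) = card (edge_set_reps Q L (walk_edges L std))"
proof -
  have vs: "map ((!) vs) std = vs" and inj: "inj_on ((!) vs) (set std)"
    using relabel_std[OF assms] by auto
  then have len: "length std = Suc L" using length_shape[OF assms] by (metis length_map)
  then have "\<Union> (walk_edges L std) \<subseteq> set std"
    unfolding walk_edges_eq_image by auto
  moreover have "walk_edges L vs = (`) ((!) vs) ` walk_edges L std"
    using walk_edges_map[OF len] vs by metis
  ultimately show ?thesis
    using card_edge_set_reps_image[of "walk_edges L std" "(!) vs"] inj_on_subset[OF inj]
    by (simp add: walk_edges_eq_image)
qed

theorem card_shaped_walks_eq_edge_sets:
  assumes wf: "wf_graph G"
  shows "card (shaped_walks Q G) = card (walk_edges L ` shaped_walks Q G) * card (edge_set_reps Q L (walk_edges L std))"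
proof (rule card_eq_card_times_fibre_card[OF finite_shaped_walks[OF wf]])
  fix E assume "E \<in> walk_edges L ` shaped_walks Q G"
  then obtain ws where ws: "ws \<in> shaped_walks Q G" "E = walk_edges L ws" by auto
  then have "{vs \<in> shaped_walks Q G. walk_edges L vs = E} = edge_set_reps Q L E"
    using successively_if_walk_edges_eq[OF wf] length_shape
    by (auto simp: shaped_walks_def edge_set_reps_def)
  then show "card {vs \<in> shaped_walks Q G. walk_edges L vs = E} = card (edge_set_reps Q L (walk_edges L std))"
    using card_edge_set_reps_eq_std ws by (simp add: shaped_walks_def)
qed (use finite_shaped_walks[OF wf] in auto)

lemma card_shaped_walks_from_le:
  assumes wf: "wf_graph G" and \<sigma>: "graph_aut G \<sigma>"
  shows "card (shaped_walks_from Q G a b) \<le> card (shaped_walks_from Q G (\<sigma> a) (\<sigma> b))"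
proof (rule card_inj_on_le)
  have inj: "inj_on \<sigma> (verts G)" and adj: "\<And>u v. u \<in> verts G \<Longrightarrow> v \<in> verts G \<Longrightarrow>
      adj G (\<sigma> u) (\<sigma> v) \<longleftrightarrow> adj G u v"
    using \<sigma> by (auto simp: graph_aut_def bij_betw_def)
  have sub: "set vs \<subseteq> verts G" if "vs \<in> shaped_walks_from Q G a b" for vs
    using that set_subset_verts[OF wf] by (auto simp: shaped_walks_from_def)
  show "inj_on (map \<sigma>) (shaped_walks_from Q G a b)"
    using inj_on_map_eq_map[OF inj_on_subset[OF inj]] sub by (auto intro!: inj_onI)
  have "map \<sigma> vs \<in> shaped_walks_from Q G (\<sigma> a) (\<sigma> b)" if vs: "vs \<in> shaped_walks_from Q G a b" for vs
  proof -
    have "Q (map \<sigma> vs)" using vs shape_map inj_on_subset[OF inj sub[OF vs]]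
      by (auto simp: shaped_walks_from_def shaped_walks_def)
    moreover have "successively (adj G) (map \<sigma> vs)"
      using vs sub[OF vs] adj unfolding successively_map
      by (auto simp: shaped_walks_from_def shaped_walks_def elim!: successively_mono)
    moreover have "0 < length vs" "1 < length vs"
      using vs length_shape L_pos by (auto simp: shaped_walks_from_def shaped_walks_def)
    ultimately show ?thesis using vs by (auto simp: shaped_walks_from_def shaped_walks_def nth_map)
  qed
  then show "map \<sigma> ` shaped_walks_from Q G a b \<subseteq> shaped_walks_from Q G (\<sigma> a) (\<sigma> b)" by auto
  show "finite (shaped_walks_from Q G (\<sigma> a) (\<sigma> b))"
    using finite_shaped_walks[OF wf] by (simp add: shaped_walks_from_def)
qed

lemma card_shaped_walks_from_aut:
  assumes wf: "wf_graph G" and \<sigma>: "graph_aut G \<sigma>" and "a \<in> verts G" "b \<in> verts G"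
  shows "card (shaped_walks_from Q G (\<sigma> a) (\<sigma> b)) = card (shaped_walks_from Q G a b)"
proof (rule antisym)
  have "inj_on \<sigma> (verts G)" using \<sigma> by (simp add: graph_aut_def bij_betw_def)
  then show "card (shaped_walks_from Q G (\<sigma> a) (\<sigma> b)) \<le> card (shaped_walks_from Q G a b)"
    using card_shaped_walks_from_le[OF wf graph_aut_inv[OF \<sigma>], of "\<sigma> a" "\<sigma> b"] assms(3,4) by simp
qed (rule card_shaped_walks_from_le[OF wf \<sigma>])

theorem card_shaped_walks_eq_arcs:
  assumes wf: "wf_graph G" and "adj G a0 b0"
    and arc_images: "\<And>a b. adj G a b \<Longrightarrow> \<exists>\<sigma>. graph_aut G \<sigma> \<and> \<sigma> a0 = a \<and> \<sigma> b0 = b"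
  shows "card (shaped_walks Q G) = card (arcs G) * card (shaped_walks_from Q G a0 b0)"
proof (rule card_eq_card_times_fibre_card[OF finite_shaped_walks[OF wf], of "arcs G" "\<lambda>vs. (vs ! 0, vs ! 1)"])
  show "finite (arcs G)"
    using wf by (simp add: arcs_eq_Sigma wf_graph_def)
  have "adj G (vs ! 0) (vs ! 1)" if "vs \<in> shaped_walks Q G" for vs
    using that successively_nth[of "adj G" vs 0] length_shape L_pos by (auto simp: shaped_walks_def)
  then show "(\<lambda>vs. (vs ! 0, vs ! 1)) ` shaped_walks Q G \<subseteq> arcs G"
    by (auto simp: arcs_def)
  fix ab assume "ab \<in> arcs G"
  then obtain a b where ab: "ab = (a, b)" "adj G a b" by (auto simp: arcs_def)
  then obtain \<sigma> where "graph_aut G \<sigma>" "\<sigma> a0 = a" "\<sigma> b0 = b" using arc_images by blast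
  moreover have "a0 \<in> verts G" "b0 \<in> verts G" using wf assms(2) by (auto simp: wf_graph_def)
  ultimately have "card (shaped_walks_from Q G a b) = card (shaped_walks_from Q G a0 b0)"
    using card_shaped_walks_from_aut[OF wf] by metis
  then show "card {vs \<in> shaped_walks Q G. (vs ! 0, vs ! 1) = ab} = card (shaped_walks_from Q G a0 b0)"
    by (simp add: ab shaped_walks_from_def)
qed

end

definition cycle_list :: "nat \<Rightarrow> nat list \<Rightarrow> bool" where
  "cycle_list L vs \<longleftrightarrow> length vs = Suc L \<and> distinct (take L vs) \<and> vs ! L = vs ! 0"

definition path_list :: "nat \<Rightarrow> nat list \<Rightarrow> bool" where
  "path_list L vs \<longleftrightarrow> length vs = Suc L \<and> distinct vs"

lemma walk_shape_cycle_list: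
  assumes "0 < L"
  shows "walk_shape L (cycle_list L) (map (\<lambda>k. k mod L) [0..<Suc L])"
proof
  fix vs and \<phi> :: "nat \<Rightarrow> nat"
  assume "cycle_list L vs" "inj_on \<phi> (set vs)"
  then show "cycle_list L (map \<phi> vs)"
    unfolding cycle_list_def
    by (auto simp: take_map intro!: distinct_map[THEN iffD2] inj_on_subset[OF _ set_take_subset])
next
  fix vs assume "cycle_list L vs"
  then have len: "length vs = Suc L" and dist: "distinct (take L vs)" and last: "vs ! L = vs ! 0"
    by (auto simp: cycle_list_def)
  have "vs ! (k mod L) = vs ! k" if "k \<le> L" for k
    using that last by (cases "k = L") auto
  then have "map ((!) vs) (map (\<lambda>k. k mod L) [0..<Suc L]) = vs"
    using len by (intro nth_equalityI) (auto simp del: upt_Suc)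
  moreover have "set (map (\<lambda>k. k mod L) [0..<Suc L]) \<subseteq> {..<L}"
    using assms by auto
  moreover have "inj_on ((!) vs) {..<L}"
  proof (rule inj_onI)
    fix x y assume "x \<in> {..<L}" "y \<in> {..<L}" "vs ! x = vs ! y"
    then show "x = y" using nth_eq_iff_index_eq[OF dist, of x y] len by simp
  qed
  ultimately show "map ((!) vs) (map (\<lambda>k. k mod L) [0..<Suc L]) = vs \<and>
      inj_on ((!) vs) (set (map (\<lambda>k. k mod L) [0..<Suc L]))"
    using inj_on_subset by blast
qed (use assms in \<open>simp_all add: cycle_list_def\<close>)

lemma walk_shape_path_list:
  assumes "0 < L"
  shows "walk_shape L (path_list L) [0..<Suc L]"
proof
  fix vs assume "path_list L vs"
  then have "length vs = Suc L" "distinct vs" by (auto simp: path_list_def)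
  then show "map ((!) vs) [0..<Suc L] = vs \<and> inj_on ((!) vs) (set [0..<Suc L])"
    by (metis atLeastLessThan_iff inj_on_def map_nth nth_eq_iff_index_eq set_upt)
qed (use assms in \<open>auto simp: path_list_def distinct_map\<close>)

lemma is_cycle_iff: "is_cycle G L vs \<longleftrightarrow> 3 \<le> L \<and> cycle_list L vs \<and> successively (adj G) vs"
  by (auto simp: is_cycle_def is_walk_def cycle_list_def successively_conv_nth)

lemma is_path_iff: "is_path G L vs \<longleftrightarrow> 0 < L \<and> path_list L vs \<and> successively (adj G) vs"
  by (auto simp: is_path_def is_walk_def path_list_def successively_conv_nth)

lemma cycle_list_iff:
  "0 < L \<Longrightarrow> cycle_list L vs \<longleftrightarrow> (\<exists>xs. length xs = L \<and> distinct xs \<and> vs = xs @ [hd xs])"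
proof
  assume "0 < L" "cycle_list L vs"
  then have len: "length vs = Suc L" and "distinct (take L vs)" and "vs ! L = vs ! 0"
    by (auto simp: cycle_list_def)
  moreover have "hd (take L vs) = vs ! 0"
    using len \<open>0 < L\<close> by (cases vs) auto
  moreover have "vs = take L vs @ [vs ! L]"
    using len take_Suc_conv_app_nth[of L vs] by simp
  ultimately have "length (take L vs) = L" "distinct (take L vs)" "vs = take L vs @ [hd (take L vs)]"
    by auto
  then show "\<exists>xs. length xs = L \<and> distinct xs \<and> vs = xs @ [hd xs]" by blast
qed (auto simp: cycle_list_def nth_append hd_conv_nth)

lemma cycles_eq_shaped_walks: "3 \<le> L \<Longrightarrow> {vs. is_cycle G L vs} = shaped_walks (cycle_list L) G"
  by (auto simp: is_cycle_iff shaped_walks_def)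

lemma paths_eq_shaped_walks: "0 < L \<Longrightarrow> {vs. is_path G L vs} = shaped_walks (path_list L) G"
  by (auto simp: is_path_iff shaped_walks_def)

text \<open>The number of vertex lists of \<open>L\<close>-cycles is a multiple, independent of the graph, of the
  number of \<open>L\<close>-cycles; likewise for paths.\<close>
lemma count_cycles_neq_if_card_neq:
  assumes "3 \<le> L" "wf_graph G1" "wf_graph G2"
    and "card {vs. is_cycle G1 L vs} \<noteq> card {vs. is_cycle G2 L vs}"
  shows "count_cycles L G1 \<noteq> count_cycles L G2"
  using assms walk_shape.card_shaped_walks_eq_edge_sets[OF walk_shape_cycle_list]
  by (auto simp: count_cycles_def cycles_eq_shaped_walks)

lemma count_paths_neq_if_card_neq:
  assumes "0 < L" "wf_graph G1" "wf_graph G2"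
    and "card {vs. is_path G1 L vs} \<noteq> card {vs. is_path G2 L vs}"
  shows "count_paths L G1 \<noteq> count_paths L G2"
  using assms walk_shape.card_shaped_walks_eq_edge_sets[OF walk_shape_path_list]
  by (auto simp: count_paths_def paths_eq_shaped_walks)

section \<open>Neighbour tables and enumeration of walks\<close>

definition extension_set :: "graph \<Rightarrow> (nat \<Rightarrow> bool) \<Rightarrow> nat \<Rightarrow> nat list \<Rightarrow> nat list set" where
  "extension_set G P m vs =
     {ys. length ys = m \<and> distinct (vs @ ys) \<and> successively (adj G) (vs @ ys) \<and> P (last (vs @ ys))}"

text \<open>Depth-first search over the neighbour lists \<open>nb\<close>. The walk is kept reversed, so that its current
  end is the head of \<open>vs\<close>; the last step is counted rather than enumerated.\<close>
fun extensions :: "nat list list \<Rightarrow> (nat \<Rightarrow> bool) \<Rightarrow> nat \<Rightarrow> nat list \<Rightarrow> nat" where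
  "extensions nb P 0 vs = (if P (hd vs) then 1 else 0)"
| "extensions nb P (Suc 0) vs = length (filter (\<lambda>w. w \<notin> set vs \<and> P w) (nb ! hd vs))"
| "extensions nb P (Suc (Suc m)) vs =
     sum_list (map (\<lambda>w. extensions nb P (Suc m) (w # vs)) (filter (\<lambda>w. w \<notin> set vs) (nb ! hd vs)))"

lemma extensions_Suc:
  "extensions nb P (Suc m) vs =
     sum_list (map (\<lambda>w. extensions nb P m (w # vs)) (filter (\<lambda>w. w \<notin> set vs) (nb ! hd vs)))"
proof (cases m)
  case 0
  have "length (filter (\<lambda>w. w \<notin> set vs \<and> P w) xs) =
      sum_list (map (\<lambda>w. if P w then 1 else 0) (filter (\<lambda>w. w \<notin> set vs) xs))" for xs
    by (induction xs) auto
  then show ?thesis using 0 by simp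
qed simp

definition nbr_table :: "graph \<Rightarrow> nat list list \<Rightarrow> bool" where
  "nbr_table G nb \<longleftrightarrow> (\<forall>u\<in>verts G. distinct (nb ! u) \<and> set (nb ! u) = {v. adj G u v})"

lemma nbr_table_adj: "nbr_table G nb \<Longrightarrow> u \<in> verts G \<Longrightarrow> v \<in> set (nb ! u) \<longleftrightarrow> adj G u v"
  by (simp add: nbr_table_def)

definition table_aut :: "nat list list \<Rightarrow> (nat \<Rightarrow> nat) \<Rightarrow> bool" where
  "table_aut nb \<sigma> \<longleftrightarrow> (\<forall>u<length nb. \<sigma> u < length nb) \<and> distinct (map \<sigma> [0..<length nb]) \<and>
     (\<forall>u<length nb. set (map \<sigma> (nb ! u)) = set (nb ! \<sigma> u))"

lemma nbr_table_if_filter: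
  assumes "verts G = {..<N}" "\<And>u v. adj G u v \<Longrightarrow> v < N"
    and "nb = map (\<lambda>u. filter (adj G u) [0..<N]) [0..<N]"
  shows "nbr_table G nb"
  using assms by (auto simp: nbr_table_def)

lemma strongly_regular_if_nbr_table:
  assumes wf: "wf_graph G" and V: "verts G = {..<N}" and nb: "nbr_table G nb"
    and degree: "\<forall>u<N. length (nb ! u) = k"
    and common: "\<forall>u<N. \<forall>v<N. u \<noteq> v \<longrightarrow>
      length (filter (\<lambda>x. x \<in> set (nb ! v)) (nb ! u)) = (if v \<in> set (nb ! u) then l else m)"
  shows "strongly_regular G N k l m"
proof -
  have row: "{x\<in>verts G. adj G u x} = set (nb ! u)" "distinct (nb ! u)" if "u < N" for u
    using that nb wf V by (auto simp: nbr_table_def wf_graph_def)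
  have "card {x\<in>verts G. adj G u x} = k" if "u < N" for u
    using row[OF that] degree that by (simp add: distinct_card)
  moreover have "card {x\<in>verts G. adj G u x \<and> adj G v x} = (if adj G u v then l else m)"
    if "u < N" "v < N" "u \<noteq> v" for u v
  proof -
    have "{x\<in>verts G. adj G u x \<and> adj G v x} = set (filter (\<lambda>x. x \<in> set (nb ! v)) (nb ! u))"
      using row[OF that(1)] row[OF that(2)] by auto
    then have "card {x\<in>verts G. adj G u x \<and> adj G v x} = length (filter (\<lambda>x. x \<in> set (nb ! v)) (nb ! u))"
      using row(2)[OF that(1)] by (simp only: distinct_card distinct_filter)
    moreover have "v \<in> set (nb ! u) \<longleftrightarrow> adj G u v"
      using row[OF that(1)] that(2) V by auto
    ultimately show ?thesis
      using common that by simp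
  qed
  ultimately show ?thesis
    using wf V by (simp add: strongly_regular_def)
qed

lemma graph_aut_if_table_aut:
  assumes wf: "wf_graph G" and V: "verts G = {..<length nb}" and nb: "nbr_table G nb" and \<sigma>: "table_aut nb \<sigma>"
  shows "graph_aut G \<sigma>"
proof -
  let ?N = "length nb"
  have maps: "\<forall>u<?N. \<sigma> u < ?N" and dist: "distinct (map \<sigma> [0..<?N])"
    and rows: "\<forall>u<?N. \<sigma> ` set (nb ! u) = set (nb ! \<sigma> u)"
    using \<sigma> by (auto simp: table_aut_def)
  have inj: "inj_on \<sigma> {..<?N}"
    using dist by (simp add: distinct_map atLeast0LessThan)
  then have "\<sigma> ` {..<?N} = {..<?N}"
    using maps by (intro endo_inj_surj) auto
  then have "bij_betw \<sigma> {..<?N} {..<?N}"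
    using inj by (simp add: bij_betw_def)
  moreover have "adj G (\<sigma> u) (\<sigma> v) \<longleftrightarrow> adj G u v" if "u < ?N" "v < ?N" for u v
  proof -
    have "set (nb ! u) \<subseteq> {..<?N}" using nb wf V that(1) by (auto simp: nbr_table_def wf_graph_def)
    then have "\<sigma> v \<in> \<sigma> ` set (nb ! u) \<longleftrightarrow> v \<in> set (nb ! u)"
      using inj that(2) by (auto simp: inj_on_image_mem_iff)
    then show ?thesis using nb V rows maps that by (simp add: nbr_table_def)
  qed
  ultimately show ?thesis using V by (simp add: graph_aut_def)
qed

lemma finite_extension_set:
  assumes "wf_graph G" "vs \<noteq> []"
  shows "finite (extension_set G P m vs)"
proof (rule finite_subset)
  have "set ys \<subseteq> verts G" if "ys \<in> extension_set G P m vs" for ys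
  proof (cases ys)
    case (Cons y ys')
    then have "length (vs @ ys) \<noteq> 1" using assms(2) by (cases vs) auto
    then show ?thesis using that set_subset_verts_if_successively[OF assms(1), of "vs @ ys"]
      by (auto simp: extension_set_def)
  qed simp
  then show "extension_set G P m vs \<subseteq> {ys. set ys \<subseteq> verts G \<and> length ys = m}"
    by (auto simp: extension_set_def)
  show "finite {ys. set ys \<subseteq> verts G \<and> length ys = m}"
    using assms(1) by (intro finite_lists_length_eq) (simp add: wf_graph_def)
qed

lemma extension_set_Suc:
  assumes nb: "nbr_table G nb" and "vs \<noteq> []" "last vs \<in> verts G"
  shows "extension_set G P (Suc m) vs =
    (\<Union>w\<in>set (filter (\<lambda>w. w \<notin> set vs) (nb ! last vs)). (#) w ` extension_set G P m (vs @ [w]))"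
proof -
  have nb_last: "w \<in> set (nb ! last vs) \<longleftrightarrow> adj G (last vs) w" for w
    using nb assms(3) by (simp add: nbr_table_def)
  show ?thesis
  proof (intro equalityI subsetI)
    fix xs assume xs: "xs \<in> extension_set G P (Suc m) vs"
    then obtain w ys where xs_eq: "xs = w # ys" by (cases xs) (auto simp: extension_set_def)
    then have "w \<in> set (filter (\<lambda>w. w \<notin> set vs) (nb ! last vs))" "ys \<in> extension_set G P m (vs @ [w])"
      using xs assms(2) nb_last by (auto simp: extension_set_def successively_append_iff)
    then show "xs \<in> (\<Union>w\<in>set (filter (\<lambda>w. w \<notin> set vs) (nb ! last vs)). (#) w ` extension_set G P m (vs @ [w]))"
      using xs_eq by blast
  next
    fix xs assume "xs \<in> (\<Union>w\<in>set (filter (\<lambda>w. w \<notin> set vs) (nb ! last vs)). (#) w ` extension_set G P m (vs @ [w]))"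
    then show "xs \<in> extension_set G P (Suc m) vs"
      using assms(2) nb_last by (auto simp: extension_set_def successively_append_iff)
  qed
qed

lemma card_extension_set:
  assumes wf: "wf_graph G" and nb: "nbr_table G nb"
  shows "vs \<noteq> [] \<Longrightarrow> last vs \<in> verts G \<Longrightarrow> distinct vs \<Longrightarrow> successively (adj G) vs \<Longrightarrow>
    card (extension_set G P m vs) = extensions nb P m (rev vs)"
proof (induction m arbitrary: vs)
  case 0
  then have "extension_set G P 0 vs = (if P (last vs) then {[]} else {})"
    by (auto simp: extension_set_def)
  then show ?case using 0 by (simp add: hd_rev)
next
  case (Suc m)
  let ?ws = "filter (\<lambda>w. w \<notin> set vs) (nb ! last vs)"
  let ?E = "\<lambda>w. extension_set G P m (vs @ [w])"
  have nb_last: "distinct (nb ! last vs)" "set (nb ! last vs) = {w. adj G (last vs) w}"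
    using nb Suc.prems(2) by (auto simp: nbr_table_def)
  have "card (extension_set G P (Suc m) vs) = (\<Sum>w\<in>set ?ws. card ((#) w ` ?E w))"
    unfolding extension_set_Suc[OF nb Suc.prems(1,2)]
  proof (rule card_UN_disjoint)
    show "\<forall>w\<in>set ?ws. finite ((#) w ` ?E w)"
      using finite_extension_set[OF wf] by simp
  qed auto
  also have "\<dots> = (\<Sum>w\<in>set ?ws. extensions nb P m (w # rev vs))"
  proof (rule sum.cong)
    fix w assume "w \<in> set ?ws"
    then have "adj G (last vs) w" "w \<notin> set vs" using nb_last by auto
    moreover have "w \<in> verts G" using calculation(1) wf by (simp add: wf_graph_def)
    ultimately have "card (?E w) = extensions nb P m (w # rev vs)"
      using Suc.IH[of "vs @ [w]"] Suc.prems by (simp add: successively_append_iff)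
    then show "card ((#) w ` ?E w) = extensions nb P m (w # rev vs)"
      by (simp add: card_image inj_on_def)
  qed simp
  also have "\<dots> = extensions nb P (Suc m) (rev vs)"
    using nb_last(1) by (simp add: extensions_Suc sum_list_distinct_conv_sum_set hd_rev)
  finally show ?case .
qed

lemma shaped_walks_from_cycle_list:
  assumes "3 \<le> L" and wf: "wf_graph G" and nb: "nbr_table G nb"
  shows "shaped_walks_from (cycle_list L) G a b =
    (\<lambda>ys. a # b # ys @ [a]) ` extension_set G (\<lambda>w. a \<in> set (nb ! w)) (L - 2) [a, b]"
proof (intro equalityI subsetI)
  fix vs assume "vs \<in> shaped_walks_from (cycle_list L) G a b"
  then obtain xs where xs: "length xs = L" "distinct xs" "vs = xs @ [hd xs]"
    and walk: "successively (adj G) vs" and ab: "vs ! 0 = a" "vs ! 1 = b"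
    using cycle_list_iff[of L] assms(1) by (auto simp: shaped_walks_from_def shaped_walks_def)
  then obtain ys where ys: "xs = a # b # ys"
    using assms(1) by (cases xs rule: remdups_adj.cases) auto
  then have "successively (adj G) ((a # b # ys) @ [a])"
    using walk xs(3) by simp
  then have "successively (adj G) (a # b # ys)" "adj G (last (a # b # ys)) a"
    unfolding successively_append_iff by simp_all
  moreover have "last (a # b # ys) \<in> verts G"
    using calculation(2) wf by (simp add: wf_graph_def)
  ultimately have "ys \<in> extension_set G (\<lambda>w. a \<in> set (nb ! w)) (L - 2) [a, b]"
    using xs ys walk nbr_table_adj[OF nb] by (simp add: extension_set_def successively_append_iff)
  then show "vs \<in> (\<lambda>ys. a # b # ys @ [a]) ` extension_set G (\<lambda>w. a \<in> set (nb ! w)) (L - 2) [a, b]"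
    using xs(3) ys by simp
next
  fix vs assume "vs \<in> (\<lambda>ys. a # b # ys @ [a]) ` extension_set G (\<lambda>w. a \<in> set (nb ! w)) (L - 2) [a, b]"
  then obtain ys where vs: "vs = a # b # ys @ [a]" and ys: "ys \<in> extension_set G (\<lambda>w. a \<in> set (nb ! w)) (L - 2) [a, b]"
    by blast
  have "last (a # b # ys) \<in> verts G"
    using ys set_subset_verts_if_successively[OF wf, of "a # b # ys"] by (auto simp: extension_set_def)
  then have "adj G (last (a # b # ys)) a"
    using ys nbr_table_adj[OF nb] by (simp add: extension_set_def)
  then have "successively (adj G) ((a # b # ys) @ [a])"
    using ys unfolding successively_append_iff by (simp add: extension_set_def)
  then have "successively (adj G) vs"
    using vs by simp
  moreover have "cycle_list L vs"
    using ys vs assms(1) cycle_list_iff[of L vs] by (auto simp: extension_set_def)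
  ultimately show "vs \<in> shaped_walks_from (cycle_list L) G a b"
    using vs by (simp add: shaped_walks_from_def shaped_walks_def)
qed

lemma shaped_walks_from_path_list:
  assumes "0 < L"
  shows "shaped_walks_from (path_list L) G a b =
    (\<lambda>ys. a # b # ys) ` extension_set G (\<lambda>_. True) (L - 1) [a, b]"
proof (intro equalityI subsetI)
  fix vs assume vs: "vs \<in> shaped_walks_from (path_list L) G a b"
  then obtain ys where "vs = a # b # ys"
    using assms by (cases vs rule: remdups_adj.cases)
      (auto simp: shaped_walks_from_def shaped_walks_def path_list_def)
  then show "vs \<in> (\<lambda>ys. a # b # ys) ` extension_set G (\<lambda>_. True) (L - 1) [a, b]"
    using vs by (auto simp: shaped_walks_from_def shaped_walks_def path_list_def extension_set_def)
qed (use assms in \<open>auto simp: shaped_walks_from_def shaped_walks_def path_list_def extension_set_def\<close>)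

lemma card_shaped_walks_from_cycle_list:
  assumes "3 \<le> L" and wf: "wf_graph G" and nb: "nbr_table G nb" and "adj G a b"
  shows "card (shaped_walks_from (cycle_list L) G a b) = extensions nb (\<lambda>w. a \<in> set (nb ! w)) (L - 2) [b, a]"
proof -
  have "card (extension_set G (\<lambda>w. a \<in> set (nb ! w)) (L - 2) [a, b]) =
      extensions nb (\<lambda>w. a \<in> set (nb ! w)) (L - 2) [b, a]"
    using card_extension_set[OF wf nb, of "[a, b]"] assms(4) wf by (simp add: wf_graph_def)
  moreover have "inj (\<lambda>ys. a # b # ys @ [a])"
    by (simp add: inj_def)
  ultimately show ?thesis
    unfolding shaped_walks_from_cycle_list[OF assms(1-3)] by (simp add: card_image inj_on_subset)
qed

lemma card_shaped_walks_from_path_list: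
  assumes "0 < L" and wf: "wf_graph G" and nb: "nbr_table G nb" and "adj G a b"
  shows "card (shaped_walks_from (path_list L) G a b) = extensions nb (\<lambda>_. True) (L - 1) [b, a]"
proof -
  have "card (extension_set G (\<lambda>_. True) (L - 1) [a, b]) = extensions nb (\<lambda>_. True) (L - 1) [b, a]"
    using card_extension_set[OF wf nb, of "[a, b]"] assms(4) wf by (simp add: wf_graph_def)
  moreover have "inj (\<lambda>ys. a # b # ys)"
    by (simp add: inj_def)
  ultimately show ?thesis
    unfolding shaped_walks_from_path_list[OF assms(1)] by (simp add: card_image inj_on_subset)
qed

lemma card_cycles_arc_transitive:
  assumes "3 \<le> L" and wf: "wf_graph G" and nb: "nbr_table G nb" and "adj G a0 b0"
    and "\<And>a b. adj G a b \<Longrightarrow> \<exists>\<sigma>. graph_aut G \<sigma> \<and> \<sigma> a0 = a \<and> \<sigma> b0 = b"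
  shows "card {vs. is_cycle G L vs} = card (arcs G) * extensions nb (\<lambda>w. a0 \<in> set (nb ! w)) (L - 2) [b0, a0]"
  using walk_shape.card_shaped_walks_eq_arcs[OF walk_shape_cycle_list wf assms(4,5)]
    card_shaped_walks_from_cycle_list[OF assms(1-4)] assms(1)
  by (simp add: cycles_eq_shaped_walks)

lemma card_paths_arc_transitive:
  assumes "0 < L" and wf: "wf_graph G" and nb: "nbr_table G nb" and "adj G a0 b0"
    and "\<And>a b. adj G a b \<Longrightarrow> \<exists>\<sigma>. graph_aut G \<sigma> \<and> \<sigma> a0 = a \<and> \<sigma> b0 = b"
  shows "card {vs. is_path G L vs} = card (arcs G) * extensions nb (\<lambda>_. True) (L - 1) [b0, a0]"
  using walk_shape.card_shaped_walks_eq_arcs[OF walk_shape_path_list wf assms(4,5)]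
    card_shaped_walks_from_path_list[OF assms(1-4)] assms(1)
  by (simp add: paths_eq_shaped_walks)

section \<open>The rook's graph and the Shrikhande graph\<close>

text \<open>The Cayley graph of \<open>\<int>\<^sub>4 \<times> \<int>\<^sub>4\<close> with connection set \<open>C\<close>; vertex \<open>4 a + b\<close> stands for \<open>(a, b)\<close>.\<close>
definition cayley_Z4xZ4 :: "(int \<times> int) set \<Rightarrow> graph" where
  "cayley_Z4xZ4 C = \<lparr>verts = {..<16},
     adj = (\<lambda>u v. u < 16 \<and> v < 16 \<and>
       ((int (v div 4) - int (u div 4)) mod 4, (int (v mod 4) - int (u mod 4)) mod 4) \<in> C),
     nattr = (\<lambda>_. []), eattr = (\<lambda>_ _. [])\<rparr>"

lemma wf_cayley_Z4xZ4:
  assumes "(0, 0) \<notin> C" and neg_C: "\<And>x y. (x, y) \<in> C \<Longrightarrow> ((- x) mod 4, (- y) mod 4) \<in> C"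
  shows "wf_graph (cayley_Z4xZ4 C)"
proof -
  have neg: "(int a - int b) mod 4 = (- ((int b - int a) mod 4)) mod 4" for a b :: nat
    by (simp add: mod_minus_eq)
  have "u \<noteq> v \<and> adj (cayley_Z4xZ4 C) v u" if "adj (cayley_Z4xZ4 C) u v" for u v
  proof -
    have C: "((int (v div 4) - int (u div 4)) mod 4, (int (v mod 4) - int (u mod 4)) mod 4) \<in> C"
      using that by (simp add: cayley_Z4xZ4_def)
    then have "u \<noteq> v" using assms(1) by auto
    moreover have "((int (u div 4) - int (v div 4)) mod 4, (int (u mod 4) - int (v mod 4)) mod 4) \<in> C"
      using neg_C[OF C] by (simp only: neg[of "u div 4"] neg[of "u mod 4"])
    ultimately show ?thesis using that by (simp add: cayley_Z4xZ4_def)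
  qed
  then show ?thesis by (auto simp: wf_graph_def cayley_Z4xZ4_def)
qed

definition translate :: "nat \<Rightarrow> nat \<Rightarrow> nat" where
  "translate c v = 4 * ((v div 4 + c div 4) mod 4) + (v mod 4 + c mod 4) mod 4"

lemma translate_div_mod:
  "translate c v div 4 = (v div 4 + c div 4) mod 4" "translate c v mod 4 = (v mod 4 + c mod 4) mod 4"
  by (simp_all add: translate_def)

lemma translate_lt: "translate c v < 16"
  unfolding translate_def by linarith

lemma translate_zero: "c < 16 \<Longrightarrow> translate c 0 = c"
  by (simp add: translate_def)

lemma diff_add_mod_4: "(int ((x + a) mod 4) - int ((y + a) mod 4)) mod 4 = (int x - int y) mod 4"
proof -
  have "(int ((x + a) mod 4) - int ((y + a) mod 4)) mod 4 = ((int x + int a) mod 4 - (int y + int a) mod 4) mod 4"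
    by (simp only: of_nat_mod of_nat_add of_nat_numeral)
  also have "\<dots> = (int x - int y) mod 4"
    by (simp only: mod_diff_eq) simp
  finally show ?thesis .
qed

lemma eq_if_diff_mod_4:
  fixes x y :: nat
  assumes "x < 4" "y < 4" "(int x - int y) mod 4 = 0"
  shows "x = y"
proof -
  obtain k where k: "int x - int y = k * 4"
    using assms(3) by (auto simp: mod_eq_0_iff_dvd dvd_def mult.commute)
  then have "k * 4 < 4" "- 4 < k * 4" using assms(1,2) by linarith+
  then have "k = 0" by simp
  then show ?thesis using k by simp
qed

lemma inj_on_translate: "inj_on (translate c) {..<16}"
proof (rule inj_onI)
  fix u v :: nat assume "u \<in> {..<16}" "v \<in> {..<16}" and eq: "translate c u = translate c v"
  then have lt: "u div 4 < 4" "v div 4 < 4" "u mod 4 < 4" "v mod 4 < 4"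
    by simp_all
  have "(int (u div 4) - int (v div 4)) mod 4 = 0" "(int (u mod 4) - int (v mod 4)) mod 4 = 0"
    using diff_add_mod_4[of "u div 4" "c div 4" "v div 4"] diff_add_mod_4[of "u mod 4" "c mod 4" "v mod 4"]
    unfolding translate_div_mod[symmetric] eq by simp_all
  then have "u div 4 = v div 4" "u mod 4 = v mod 4"
    using eq_if_diff_mod_4[OF lt(1,2)] eq_if_diff_mod_4[OF lt(3,4)] by simp_all
  then show "u = v" by (metis div_mult_mod_eq)
qed

lemma graph_aut_translate: "graph_aut (cayley_Z4xZ4 C) (translate c)"
proof -
  have "translate c ` {..<16} = {..<16}"
    using inj_on_translate translate_lt by (intro endo_inj_surj) auto
  then have "bij_betw (translate c) {..<16} {..<16}"
    using inj_on_translate by (simp add: bij_betw_def)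
  moreover have "(int (translate c v div 4) - int (translate c u div 4)) mod 4 = (int (v div 4) - int (u div 4)) mod 4"
    "(int (translate c v mod 4) - int (translate c u mod 4)) mod 4 = (int (v mod 4) - int (u mod 4)) mod 4" for u v
    unfolding translate_div_mod by (rule diff_add_mod_4)+
  ultimately show ?thesis
    by (simp add: graph_aut_def cayley_Z4xZ4_def translate_lt)
qed

primrec orbit_list :: "(nat \<Rightarrow> nat) \<Rightarrow> nat \<Rightarrow> nat \<Rightarrow> nat list" where
  "orbit_list f 0 x = []"
| "orbit_list f (Suc n) x = x # orbit_list f n (f x)"

lemma in_orbit_list: "y \<in> set (orbit_list f n x) \<Longrightarrow> \<exists>j<n. (f ^^ j) x = y"
proof (induction n arbitrary: x)
  case (Suc n)
  then consider "y = x" | "y \<in> set (orbit_list f n (f x))" by auto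
  then show ?case
  proof cases
    case 2
    then obtain j where "j < n" "(f ^^ j) (f x) = y" using Suc.IH by blast
    then show ?thesis by (intro exI[of _ "Suc j"]) (simp add: funpow_swap1)
  qed auto
qed simp

locale Z4xZ4_certificate =
  fixes C :: "(int \<times> int) set" and nb :: "nat list list" and \<rho> :: "nat \<Rightarrow> nat"
  assumes zero_notin: "(0, 0) \<notin> C"
    and neg_closed: "\<And>x y. (x, y) \<in> C \<Longrightarrow> ((- x) mod 4, (- y) mod 4) \<in> C"
    and table: "nb = map (\<lambda>u. filter (adj (cayley_Z4xZ4 C) u) [0..<16]) [0..<16]"
    and degree: "\<forall>u<16. length (nb ! u) = 6"
    and common: "\<forall>u<16. \<forall>v<16. u \<noteq> v \<longrightarrow> length (filter (\<lambda>x. x \<in> set (nb ! v)) (nb ! u)) = 2"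
    and rotation_aut: "table_aut nb \<rho>"
    and rotation_fixes_0: "\<rho> 0 = 0"
    and rotation_orbit: "set (nb ! 0) = set (orbit_list \<rho> 6 1)"
begin

abbreviation "G \<equiv> cayley_Z4xZ4 C"

lemma wf: "wf_graph G"
  using zero_notin neg_closed by (rule wf_cayley_Z4xZ4)

lemma nbr_table: "nbr_table G nb"
  using table by (rule nbr_table_if_filter[rotated 2]) (simp_all add: cayley_Z4xZ4_def)

lemma strongly_regular: "strongly_regular G 16 6 2 2"
  using degree common by (intro strongly_regular_if_nbr_table[OF wf _ nbr_table]) (simp_all add: cayley_Z4xZ4_def)

lemma unattributed: "unattributed G"
  by (simp add: unattributed_def cayley_Z4xZ4_def)

lemma card_arcs: "card (arcs G) = 96"
  using strongly_regular card_arcs_regular[OF wf, of 6] by (simp add: strongly_regular_def)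

lemma adj_0: "adj G 0 c \<longleftrightarrow> c \<in> set (nb ! 0)"
  using nbr_table by (simp add: nbr_table_def cayley_Z4xZ4_def)

lemma arc_images: "adj G a b \<Longrightarrow> \<exists>\<sigma>. graph_aut G \<sigma> \<and> \<sigma> 0 = a \<and> \<sigma> 1 = b"
proof (rule arc_images_if_vertex_transitive[OF wf])
  show "0 \<in> verts G" by (simp add: cayley_Z4xZ4_def)
  show "\<exists>\<tau>. graph_aut G \<tau> \<and> \<tau> 0 = a" if "a \<in> verts G" for a
    using that graph_aut_translate translate_zero by (auto simp: cayley_Z4xZ4_def)
  have "graph_aut G \<rho>"
    using graph_aut_if_table_aut[OF wf _ nbr_table rotation_aut] table by (simp add: cayley_Z4xZ4_def)
  then have aut: "graph_aut G (\<rho> ^^ j)" for j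
    by (rule graph_aut_funpow)
  have fix0: "(\<rho> ^^ j) 0 = 0" for j
    by (induction j) (simp_all add: rotation_fixes_0)
  show "\<exists>\<sigma>. graph_aut G \<sigma> \<and> \<sigma> 0 = 0 \<and> \<sigma> 1 = c" if c: "adj G 0 c" for c
  proof -
    obtain j where "(\<rho> ^^ j) 1 = c"
      using c rotation_orbit in_orbit_list[of c \<rho> 6 1] by (auto simp: adj_0)
    then show ?thesis using aut fix0 by blast
  qed
qed

lemma adj_0_1: "adj G 0 1"
  using rotation_orbit by (simp add: adj_0 numeral_eq_Suc)

lemma card_cycles:
  "3 \<le> L \<Longrightarrow> card {vs. is_cycle G L vs} = 96 * extensions nb (\<lambda>w. 0 \<in> set (nb ! w)) (L - 2) [1, 0]"
  using card_cycles_arc_transitive[OF _ wf nbr_table adj_0_1 arc_images] card_arcs by simp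

lemma card_paths:
  "0 < L \<Longrightarrow> card {vs. is_path G L vs} = 96 * extensions nb (\<lambda>_. True) (L - 1) [1, 0]"
  using card_paths_arc_transitive[OF _ wf nbr_table adj_0_1 arc_images] card_arcs by simp

end

definition rook_graph :: graph where
  "rook_graph = cayley_Z4xZ4 {(0, 1), (0, 2), (0, 3), (1, 0), (2, 0), (3, 0)}"

definition shrikhande_graph :: graph where
  "shrikhande_graph = cayley_Z4xZ4 {(0, 1), (0, 3), (1, 0), (3, 0), (1, 1), (3, 3)}"

definition rook_nbrs :: "nat list list" where
  "rook_nbrs =
    [[1, 2, 3, 4, 8, 12], [0, 2, 3, 5, 9, 13], [0, 1, 3, 6, 10, 14], [0, 1, 2, 7, 11, 15],
     [0, 5, 6, 7, 8, 12], [1, 4, 6, 7, 9, 13], [2, 4, 5, 7, 10, 14], [3, 4, 5, 6, 11, 15],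
     [0, 4, 9, 10, 11, 12], [1, 5, 8, 10, 11, 13], [2, 6, 8, 9, 11, 14], [3, 7, 8, 9, 10, 15],
     [0, 4, 8, 13, 14, 15], [1, 5, 9, 12, 14, 15], [2, 6, 10, 12, 13, 15], [3, 7, 11, 12, 13, 14]]"

definition shrikhande_nbrs :: "nat list list" where
  "shrikhande_nbrs =
    [[1, 3, 4, 5, 12, 15], [0, 2, 5, 6, 12, 13], [1, 3, 6, 7, 13, 14], [0, 2, 4, 7, 14, 15],
     [0, 3, 5, 7, 8, 9], [0, 1, 4, 6, 9, 10], [1, 2, 5, 7, 10, 11], [2, 3, 4, 6, 8, 11],
     [4, 7, 9, 11, 12, 13], [4, 5, 8, 10, 13, 14], [5, 6, 9, 11, 14, 15], [6, 7, 8, 10, 12, 15],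
     [0, 1, 8, 11, 13, 15], [1, 2, 8, 9, 12, 14], [2, 3, 9, 10, 13, 15], [0, 3, 10, 11, 12, 14]]"

text \<open>\<open>(a, b) \<mapsto> (\<pi> b, a)\<close> with \<open>\<pi>\<close> the 3-cycle \<open>(1 2 3)\<close>, and \<open>(a, b) \<mapsto> (a - b, a)\<close>: automorphisms fixing
  0 whose first six powers carry the neighbour 1 of 0 to all neighbours of 0.\<close>
definition rook_rotation :: "nat \<Rightarrow> nat" where
  "rook_rotation v = 4 * (if v mod 4 = 0 then 0 else v mod 4 mod 3 + 1) + v div 4"

definition shrikhande_rotation :: "nat \<Rightarrow> nat" where
  "shrikhande_rotation v = 4 * ((v div 4 + 3 * (v mod 4)) mod 4) + v div 4"

interpretation rook: Z4xZ4_certificate "{(0, 1), (0, 2), (0, 3), (1, 0), (2, 0), (3, 0)}" rook_nbrs rook_rotation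
proof
  show "rook_nbrs =
    map (\<lambda>u. filter (adj (cayley_Z4xZ4 {(0, 1), (0, 2), (0, 3), (1, 0), (2, 0), (3, 0)}) u) [0..<16]) [0..<16]"
    by code_simp
  show "\<forall>u<16. length (rook_nbrs ! u) = 6"
    by code_simp
  show "\<forall>u<16. \<forall>v<16. u \<noteq> v \<longrightarrow> length (filter (\<lambda>x. x \<in> set (rook_nbrs ! v)) (rook_nbrs ! u)) = 2"
    by code_simp
  show "table_aut rook_nbrs rook_rotation"
    by code_simp
  show "set (rook_nbrs ! 0) = set (orbit_list rook_rotation 6 1)"
    by code_simp
qed (auto simp: rook_rotation_def)

interpretation shrikhande: Z4xZ4_certificate "{(0, 1), (0, 3), (1, 0), (3, 0), (1, 1), (3, 3)}" shrikhande_nbrs shrikhande_rotation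
proof
  show "shrikhande_nbrs =
    map (\<lambda>u. filter (adj (cayley_Z4xZ4 {(0, 1), (0, 3), (1, 0), (3, 0), (1, 1), (3, 3)}) u) [0..<16]) [0..<16]"
    by code_simp
  show "\<forall>u<16. length (shrikhande_nbrs ! u) = 6"
    by code_simp
  show "\<forall>u<16. \<forall>v<16. u \<noteq> v \<longrightarrow>
      length (filter (\<lambda>x. x \<in> set (shrikhande_nbrs ! v)) (shrikhande_nbrs ! u)) = 2"
    by code_simp
  show "table_aut shrikhande_nbrs shrikhande_rotation"
    by code_simp
  show "set (shrikhande_nbrs ! 0) = set (orbit_list shrikhande_rotation 6 1)"
    by code_simp
qed (auto simp: shrikhande_rotation_def)

lemma card_cycles_rook: "card {vs. is_cycle rook_graph 8 vs} = 96 * 1992"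
proof -
  have "extensions rook_nbrs (\<lambda>w. 0 \<in> set (rook_nbrs ! w)) 6 [1, 0] = 1992"
    by code_simp
  then show ?thesis using rook.card_cycles[of 8] by (simp add: rook_graph_def)
qed

lemma card_cycles_shrikhande: "card {vs. is_cycle shrikhande_graph 8 vs} = 96 * 1948"
proof -
  have "extensions shrikhande_nbrs (\<lambda>w. 0 \<in> set (shrikhande_nbrs ! w)) 6 [1, 0] = 1948"
    by code_simp
  then show ?thesis using shrikhande.card_cycles[of 8] by (simp add: shrikhande_graph_def)
qed

lemma card_paths_rook: "card {vs. is_path rook_graph 8 vs} = 96 * 18336"
proof -
  have "extensions rook_nbrs (\<lambda>_. True) 7 [1, 0] = 18336"
    by code_simp
  then show ?thesis using rook.card_paths[of 8] by (simp add: rook_graph_def)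
qed

lemma card_paths_shrikhande: "card {vs. is_path shrikhande_graph 8 vs} = 96 * 18280"
proof -
  have "extensions shrikhande_nbrs (\<lambda>_. True) 7 [1, 0] = 18280"
    by code_simp
  then show ?thesis using shrikhande.card_paths[of 8] by (simp add: shrikhande_graph_def)
qed

theorem proposition1:
  shows "\<not> can_count_graph_level subgraph_mpnns (count_cycles 8) \<and>
         \<not> can_count_graph_level subgraph_mpnns (count_paths 8)"
proof -
  have wf: "wf_graph rook_graph" "wf_graph shrikhande_graph"
    using rook.wf shrikhande.wf by (simp_all add: rook_graph_def shrikhande_graph_def)
  have "mpnn_out P rook_graph = mpnn_out P shrikhande_graph" for P
    using mpnn_out_eq_if_strongly_regular[OF rook.strongly_regular shrikhande.strongly_regular]
      rook.unattributed shrikhande.unattributed by (simp add: rook_graph_def shrikhande_graph_def)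
  then have "\<forall>f\<in>subgraph_mpnns. f rook_graph = f shrikhande_graph"
    by (auto simp: subgraph_mpnns_def)
  moreover have "count_cycles 8 rook_graph \<noteq> count_cycles 8 shrikhande_graph"
    using count_cycles_neq_if_card_neq[OF _ wf] card_cycles_rook card_cycles_shrikhande by simp
  moreover have "count_paths 8 rook_graph \<noteq> count_paths 8 shrikhande_graph"
    using count_paths_neq_if_card_neq[OF _ wf] card_paths_rook card_paths_shrikhande by simp
  ultimately show ?thesis
    using wf unfolding can_count_graph_level_def by metis
qed

end
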